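(* Let $S\subset \mathbb{R}^2$ be such that both $S$ and $S^\mathsf{c}$ satisfy the $r$-rolling condition. Fix $\alpha\in (0,r)$ and $0<t \leq \min\{\alpha, 2\alpha^2/r\}$. There is a constant $A > 0$ depending only on $(r,\alpha)$ such that, for any $z \notin S$ with $0<\alpha -\operatorname{dist}(z, S)\leq t/A$ and any $x_1, x_2 \in \partial B(z, \alpha) \cap S$, we have \[ [x_1 x_2] \subset B(\partial S, t), \qquad \|x_1 -x_2\| \leq \sqrt{t}, \qquad \angle( [x_1 x_2], \partial S ) \leq \sqrt{t}. \]
   Context: A set $T\subset\mathbb{R}^2$ satisfies the $r$-rolling condition ($r>0$) if for every $x \in \partial T$ there is an open ball $B$ of radius $r$ with $B \cap T = \emptyset$ and $x \in \partial B$; when $S$ and $S^\mathsf{c}=\mathbb{R}^2\setminus S$ both satisfy it, $\partial S$ has a tangent line at every point and the metric projection $P_{\partial S}(x)$ (the nearest point of $\partial S$ to $x$) is unique whenever $\operatorname{dist}(x,\partial S)<r$. $B(z,\alpha)$ is the open ball of center $z$ and radius $\alpha$; $B(T,\varepsilon)=\{x:\operatorname{dist}(x,T)<\varepsilon\}$; $[x_1x_2]$ is the closed segment. For a curve $C$ (differentiable almost everywhere) and a curve $D$ with $C\subset B(D,r)$ and unique projections, the deviation angle is $\angle(C,D)=\sup_{x\in C}\angle(\vec C_x,\vec D_{P_D(x)})$, where $\vec C_x$ is the tangent line of $C$ at $x$ and the angle between two lines lies in $[0,\pi/2]$. (For a segment, the tangent is the line containing it.) *)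

theory Defs
  imports "HOL-Analysis.Analysis"
begin

definition rolling :: "(real^2) set \<Rightarrow> real \<Rightarrow> bool" where
  "rolling T r \<longleftrightarrow>
     (\<forall>x \<in> frontier T. \<exists>c. ball c r \<inter> T = {} \<and> x \<in> sphere c r)"

definition line_angle :: "real^2 \<Rightarrow> real^2 \<Rightarrow> real" where
  "line_angle u v = arccos (\<bar>u \<bullet> v\<bar> / (norm u * norm v))"

text \<open>u (nonzero) spans the tangent line of the set C at the point p \<in> C:
  the lines through p and nearby points q of C converge to the line p + span u.\<close>
definition tangent_dir :: "(real^2) set \<Rightarrow> real^2 \<Rightarrow> real^2 \<Rightarrow> bool" where
  "tangent_dir C p u \<longleftrightarrow>
     u \<noteq> 0 \<and> p \<in> C \<and> p islimpt C \<and>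
     ((\<lambda>q. line_angle (q - p) u) \<longlongrightarrow> 0) (at p within C)"

end

theory Submission
  imports Defs
begin

text \<open>Let \<open>q\<close> be the point of \<open>\<partial>S\<close> nearest to \<open>z\<close>, \<open>e\<close> the outward unit normal at \<open>q\<close> and
  \<open>d = dist(z, S)\<close>, so that \<open>z = q + d e\<close>; put \<open>\<epsilon> = \<alpha> - d\<close>. The rolling condition places
  \<open>B(q - r e, r)\<close> inside \<open>S\<close> and \<open>B(q + r e, r)\<close> outside it. A point \<open>x \<in> S\<close> on the sphere
  \<open>\<partial>B(z, \<alpha>)\<close> lies outside the outer ball, and comparing the two quadratic equations gives
  \<open>|x - q|\<^sup>2 = O(\<epsilon>)\<close> and \<open>(x - q)\<cdot>e = O(\<epsilon>)\<close>. Both bounds are convex, so every point of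
  \<open>[x\<^sub>1 x\<^sub>2]\<close> is \<open>O(\<epsilon>)\<close>-close to one of the two tangent spheres at \<open>q\<close>, hence to \<open>\<partial>S\<close>,
  and the chord has length \<open>O(\<surd>\<epsilon>)\<close>. Since \<open>x\<^sub>1, x\<^sub>2\<close> are equidistant from \<open>z\<close>, the chord is
  nearly orthogonal to \<open>e\<close>; unit normals are \<open>1/r\<close>-Lipschitz along \<open>\<partial>S\<close> and tangent lines are
  orthogonal to them, so the chord makes an angle \<open>O(\<surd>\<epsilon>)\<close> with \<open>\<partial>S\<close> at the projection of
  each of its points. Choosing \<open>\<epsilon> \<le> t/A\<close> for a large \<open>A\<close> turns these bounds into \<open>t\<close>,
  \<open>\<surd>t\<close> and \<open>\<surd>t\<close>.\<close>

definition rolling_normal :: "'a::real_normed_vector set \<Rightarrow> real \<Rightarrow> 'a \<Rightarrow> 'a \<Rightarrow> bool" where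
  "rolling_normal S r p n \<longleftrightarrow>
     norm n = 1 \<and> ball (p - r *\<^sub>R n) r \<subseteq> S \<and> ball (p + r *\<^sub>R n) r \<inter> S = {}"

lemma dist_ge_radii_if_disjoint_balls:
  fixes a b :: "'a::real_normed_vector"
  assumes "ball a \<rho> \<inter> ball b \<sigma> = {}" "0 < \<rho>" "0 < \<sigma>"
  shows "\<rho> + \<sigma> \<le> dist a b"
proof (rule ccontr)
  assume "\<not> \<rho> + \<sigma> \<le> dist a b"
  then have close: "dist a b < \<rho> + \<sigma>" by simp
  define \<mu> where "\<mu> = \<rho> / (\<rho> + \<sigma>)"
  define y where "y = a + \<mu> *\<^sub>R (b - a)"
  have "a - y = \<mu> *\<^sub>R (a - b)" "b - y = (1 - \<mu>) *\<^sub>R (b - a)"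
    by (simp_all add: y_def algebra_simps)
  moreover have "0 \<le> \<mu>" "1 - \<mu> = \<sigma> / (\<rho> + \<sigma>)"
    using assms(2,3) by (simp_all add: \<mu>_def field_simps)
  ultimately have "dist a y = \<rho> / (\<rho> + \<sigma>) * dist a b" "dist b y = \<sigma> / (\<rho> + \<sigma>) * dist a b"
    using assms(2,3) by (simp_all add: \<mu>_def dist_norm norm_minus_commute)
  moreover have "\<rho> / (\<rho> + \<sigma>) * dist a b < \<rho>" "\<sigma> / (\<rho> + \<sigma>) * dist a b < \<sigma>"
    using mult_strict_left_mono[OF close, of "\<rho> / (\<rho> + \<sigma>)"]
      mult_strict_left_mono[OF close, of "\<sigma> / (\<rho> + \<sigma>)"] assms(2,3) by simp_all
  ultimately have "y \<in> ball a \<rho>" "y \<in> ball b \<sigma>" by simp_all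
  with assms(1) show False by blast
qed

lemma parallelogram_law:
  fixes a b :: "'a::real_inner"
  shows "norm (a + b)^2 + norm (a - b)^2 = 2 * norm a^2 + 2 * norm b^2"
  unfolding power2_norm_eq_inner by (simp add: algebra_simps inner_commute)

lemma norm_add_scaleR_unit_sq:
  fixes h n :: "'a::real_inner"
  assumes "norm n = 1"
  shows "norm (h + a *\<^sub>R n)^2 = norm h^2 + 2 * a * (h \<bullet> n) + a^2"
proof -
  have "n \<bullet> n = 1" using assms by (simp flip: power2_norm_eq_inner)
  then show ?thesis unfolding power2_norm_eq_inner
    by (simp add: inner_add_left inner_add_right inner_commute power2_eq_square algebra_simps)
qed

lemma dist_ge_radius_if_frontier:
  assumes "ball c \<rho> \<subseteq> S \<or> ball c \<rho> \<inter> S = {}" "y \<in> frontier S"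
  shows "\<rho> \<le> dist c y"
proof -
  have "y \<notin> ball c \<rho>"
  proof
    assume y: "y \<in> ball c \<rho>"
    show False
      using assms(1)
    proof
      assume "ball c \<rho> \<subseteq> S"
      then have "ball c \<rho> \<subseteq> interior S" by (simp add: interior_maximal)
      then show False using y assms(2) by (auto simp: frontier_def)
    next
      assume "ball c \<rho> \<inter> S = {}"
      then have "ball c \<rho> \<inter> closure S = {}" by (simp add: open_Int_closure_eq_empty)
      then show False using y assms(2) by (auto simp: frontier_def)
    qed
  qed
  then show ?thesis by simp
qed

lemma rolling_normal_exists:
  fixes S :: "(real^2) set"
  assumes "rolling S r" "rolling (- S) r" "p \<in> frontier S" "0 < r"
  obtains n where "rolling_normal S r p n"
proof -
  \<comment> \<open>The inner and outer balls at \<open>p\<close> are disjoint, so their centres are \<open>2r\<close> apart and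
    hence antipodal about \<open>p\<close>.\<close>
  obtain c' where c': "ball c' r \<inter> S = {}" "dist c' p = r"
    using assms(1,3) unfolding rolling_def by auto
  obtain c where "ball c r \<inter> - S = {}" "dist c p = r"
    using assms(2,3) unfolding rolling_def frontier_complement by auto
  then have c: "ball c r \<subseteq> S" "dist c p = r" by auto
  have far: "2 * r \<le> norm ((c - p) - (c' - p))"
    using dist_ge_radii_if_disjoint_balls[of c r c' r] c(1) c'(1) assms(4)
    by (auto simp: dist_norm)
  have "norm ((c - p) + (c' - p))^2 = 2 * r^2 + 2 * r^2 - norm ((c - p) - (c' - p))^2"
    using parallelogram_law[of "c - p" "c' - p"] c(2) c'(2) by (simp add: dist_norm)
  also have "\<dots> \<le> 0"
    using power_mono[OF far, of 2] assms(4) by (simp add: power_mult_distrib)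
  finally have antipodal: "c = p - (c' - p)" by (simp add: algebra_simps)
  define n where "n = (1 / r) *\<^sub>R (c' - p)"
  have "c' = p + r *\<^sub>R n" "norm n = 1"
    using assms(4) c'(2) by (simp_all add: n_def dist_norm norm_minus_commute)
  then show ?thesis
    using that c c' antipodal unfolding rolling_normal_def by simp
qed

lemma rolling_normal_lipschitz:
  fixes p q np nq :: "'a::real_inner"
  assumes "rolling_normal S r p np" "rolling_normal S r q nq" "0 < r"
  shows "norm (np - nq) \<le> norm (p - q) / r"
proof -
  define D where "D = p - q"
  define N where "N = np + nq"
  have "ball (p - r *\<^sub>R np) r \<inter> ball (q + r *\<^sub>R nq) r = {}"
       "ball (q - r *\<^sub>R nq) r \<inter> ball (p + r *\<^sub>R np) r = {}"
    using assms(1,2) unfolding rolling_normal_def by blast+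
  then have "2 * r \<le> dist (p - r *\<^sub>R np) (q + r *\<^sub>R nq)" "2 * r \<le> dist (q - r *\<^sub>R nq) (p + r *\<^sub>R np)"
    using dist_ge_radii_if_disjoint_balls assms(3) by fastforce+
  moreover have "dist (p - r *\<^sub>R np) (q + r *\<^sub>R nq) = norm (D - r *\<^sub>R N)"
    "dist (q - r *\<^sub>R nq) (p + r *\<^sub>R np) = norm (D + r *\<^sub>R N)"
    by (simp_all add: D_def N_def dist_norm algebra_simps norm_minus_commute)
  ultimately have "(2 * r)^2 \<le> norm (D - r *\<^sub>R N)^2" "(2 * r)^2 \<le> norm (D + r *\<^sub>R N)^2"
    using assms(3) by (metis power_mono mult_nonneg_nonneg zero_le_numeral less_imp_le)+
  moreover have "norm (D + r *\<^sub>R N)^2 + norm (D - r *\<^sub>R N)^2 = 2 * norm D^2 + 2 * r^2 * norm N^2"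
    using parallelogram_law[of D "r *\<^sub>R N"] by (simp add: power_mult_distrib)
  moreover have "norm N^2 = 4 - norm (np - nq)^2"
    using parallelogram_law[of np nq] assms(1,2) by (simp add: N_def rolling_normal_def)
  ultimately have "(r * norm (np - nq))^2 \<le> norm D^2"
    by (simp add: power_mult_distrib algebra_simps)
  then have "r * norm (np - nq) \<le> norm D" by (rule power2_le_imp_le) simp
  then show ?thesis using assms(3) by (simp add: D_def field_simps)
qed

lemma rolling_normal_frontier_flat:
  fixes p n y :: "'a::real_inner"
  assumes "rolling_normal S r p n" "0 < r" "y \<in> frontier S"
  shows "2 * r * \<bar>(y - p) \<bullet> n\<bar> \<le> norm (y - p)^2"
proof -
  have "r \<le> norm ((y - p) + a *\<^sub>R n)" if "a = r \<or> a = - r" for a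
    using dist_ge_radius_if_frontier[of "p - a *\<^sub>R n" r S y] that assms
    by (auto simp: rolling_normal_def dist_norm algebra_simps norm_minus_commute)
  then have "r^2 \<le> norm ((y - p) + a *\<^sub>R n)^2" if "a = r \<or> a = - r" for a
    using that assms(2) by (simp add: power_mono)
  moreover have "norm ((y - p) + a *\<^sub>R n)^2 = norm (y - p)^2 + 2 * a * ((y - p) \<bullet> n) + r^2"
    if "a = r \<or> a = - r" for a
    using norm_add_scaleR_unit_sq[of n "y - p" a] that assms(1) by (auto simp: rolling_normal_def)
  ultimately have "0 \<le> norm (y - p)^2 + 2 * a * ((y - p) \<bullet> n)" if "a = r \<or> a = - r" for a
    using that by fastforce
  from this[of r] this[of "- r"] show ?thesis by (cases "(y - p) \<bullet> n \<ge> 0") auto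
qed

lemma unit_inner_bound:
  fixes a b n :: "'a::real_inner"
  assumes "norm a = 1" "norm b = 1" "norm n = 1"
  shows "\<bar>a \<bullet> b\<bar> * \<bar>b \<bullet> n\<bar> \<le> \<bar>a \<bullet> n\<bar> + sqrt (1 - (a \<bullet> b)^2)"
proof -
  define w where "w = a - (a \<bullet> b) *\<^sub>R b"
  have "a \<bullet> a = 1" "b \<bullet> b = 1" using assms(1,2) by (simp_all flip: power2_norm_eq_inner)
  then have "norm w^2 = 1 - (a \<bullet> b)^2"
    unfolding w_def power2_norm_eq_inner
    by (simp add: inner_diff_left inner_diff_right inner_commute power2_eq_square algebra_simps)
  then have "norm w = sqrt (1 - (a \<bullet> b)^2)" by (metis norm_ge_zero real_sqrt_unique)
  moreover have "\<bar>w \<bullet> n\<bar> \<le> norm w" using Cauchy_Schwarz_ineq2[of w n] assms(3) by simp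
  moreover have "w \<bullet> n = a \<bullet> n - (a \<bullet> b) * (b \<bullet> n)" by (simp add: w_def inner_diff_left)
  ultimately show ?thesis by (simp add: abs_mult)
qed

lemma tangent_dir_inner_sgn_tendsto:
  assumes "tangent_dir C p u"
  shows "((\<lambda>q. \<bar>sgn (q - p) \<bullet> sgn u\<bar>) \<longlongrightarrow> 1) (at p within C)"
proof -
  have u: "u \<noteq> 0" and angle: "((\<lambda>q. line_angle (q - p) u) \<longlongrightarrow> 0) (at p within C)"
    using assms unfolding tangent_dir_def by auto
  have "((\<lambda>q. cos (line_angle (q - p) u)) \<longlongrightarrow> cos 0) (at p within C)"
    by (intro tendsto_cos angle)
  moreover have "eventually (\<lambda>q. cos (line_angle (q - p) u) = \<bar>sgn (q - p) \<bullet> sgn u\<bar>) (at p within C)"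
    unfolding eventually_at_filter
  proof (intro always_eventually allI impI)
    fix q assume "q \<noteq> p"
    then have "\<bar>sgn (q - p) \<bullet> sgn u\<bar> \<le> 1"
      using Cauchy_Schwarz_ineq2[of "sgn (q - p)" "sgn u"] u by (simp add: norm_sgn)
    moreover have "\<bar>sgn (q - p) \<bullet> sgn u\<bar> = \<bar>(q - p) \<bullet> u\<bar> / (norm (q - p) * norm u)"
      by (simp add: sgn_div_norm abs_mult divide_inverse mult.commute)
    ultimately show "cos (line_angle (q - p) u) = \<bar>sgn (q - p) \<bullet> sgn u\<bar>"
      by (simp add: line_angle_def cos_arccos_abs)
  qed
  ultimately show ?thesis by (simp add: tendsto_cong)
qed

lemma rolling_normal_inner_sgn_tendsto:
  assumes "rolling_normal S r p n" "0 < r"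
  shows "((\<lambda>q. \<bar>sgn (q - p) \<bullet> n\<bar>) \<longlongrightarrow> 0) (at p within frontier S)"
proof (rule tendsto_sandwich[of "\<lambda>_. 0"])
  show "((\<lambda>q. norm (q - p) / (2 * r)) \<longlongrightarrow> 0) (at p within frontier S)"
    using assms(2) tendsto_divide[OF tendsto_norm[OF LIM_zero[OF tendsto_ident_at]] tendsto_const, of "2 * r"]
    by simp
  show "eventually (\<lambda>q. \<bar>sgn (q - p) \<bullet> n\<bar> \<le> norm (q - p) / (2 * r)) (at p within frontier S)"
    unfolding eventually_at_filter
  proof (intro always_eventually allI impI)
    fix q assume q: "q \<noteq> p" "q \<in> frontier S"
    then have "2 * r * \<bar>(q - p) \<bullet> n\<bar> \<le> norm (q - p) * norm (q - p)"
      using rolling_normal_frontier_flat[OF assms] by (simp add: power2_eq_square)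
    moreover have "\<bar>(q - p) \<bullet> n\<bar> = norm (q - p) * \<bar>sgn (q - p) \<bullet> n\<bar>"
      by (simp add: sgn_div_norm abs_mult q(1))
    ultimately have "norm (q - p) * (2 * r * \<bar>sgn (q - p) \<bullet> n\<bar>) \<le> norm (q - p) * norm (q - p)"
      by (simp add: algebra_simps)
    then have "2 * r * \<bar>sgn (q - p) \<bullet> n\<bar> \<le> norm (q - p)"
      using q(1) by (auto elim: mult_left_le_imp_le)
    then show "\<bar>sgn (q - p) \<bullet> n\<bar> \<le> norm (q - p) / (2 * r)"
      using assms(2) by (simp add: field_simps)
  qed
qed simp_all

lemma tangent_dir_orthogonal_normal:
  fixes S :: "(real^2) set"
  assumes "rolling_normal S r p n" "0 < r" "tangent_dir (frontier S) p u"
  shows "u \<bullet> n = 0"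
proof -
  \<comment> \<open>Along \<open>\<partial>S\<close>, \<open>sgn (q - p)\<close> becomes parallel to \<open>u\<close> and orthogonal to \<open>n\<close>.\<close>
  let ?F = "at p within frontier S"
  let ?c = "\<lambda>q. \<bar>sgn (q - p) \<bullet> sgn u\<bar>"
  have u: "u \<noteq> 0" and F: "?F \<noteq> bot"
    using assms(3) trivial_limit_within unfolding tangent_dir_def by auto
  have n: "norm n = 1" using assms(1) by (simp add: rolling_normal_def)
  note along = tangent_dir_inner_sgn_tendsto[OF assms(3)]
  note across = rolling_normal_inner_sgn_tendsto[OF assms(1,2)]
  have "((\<lambda>q. ?c q * \<bar>sgn u \<bullet> n\<bar>) \<longlongrightarrow> 1 * \<bar>sgn u \<bullet> n\<bar>) ?F"
    by (intro tendsto_intros along)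
  moreover have "((\<lambda>q. \<bar>sgn (q - p) \<bullet> n\<bar> + sqrt (1 - (?c q)^2)) \<longlongrightarrow> 0 + sqrt (1 - 1^2)) ?F"
    by (intro tendsto_intros along across)
  moreover have "eventually (\<lambda>q. ?c q * \<bar>sgn u \<bullet> n\<bar> \<le> \<bar>sgn (q - p) \<bullet> n\<bar> + sqrt (1 - (?c q)^2)) ?F"
    unfolding eventually_at_filter
    by (intro always_eventually allI impI) (simp add: unit_inner_bound norm_sgn u n)
  ultimately have "\<bar>sgn u \<bullet> n\<bar> \<le> 0"
    using tendsto_le[OF F] by fastforce
  then show ?thesis using u by (simp add: sgn_div_norm)
qed

lemma sin_ge_quarter:
  assumes "0 < \<theta>" "\<theta> < pi / 2"
  shows "\<theta> / 4 \<le> sin \<theta>"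
proof -
  have cubic: "\<bar>sin x - x\<bar> \<le> \<bar>x\<bar>^3 / 6" for x :: real
  proof -
    have "{..<3::nat} = {0, 1, 2}" by auto
    moreover have "sin_coeff 1 = 1" "sin_coeff 2 = 0" by (simp_all add: sin_coeff_def)
    ultimately have "(\<Sum>m<3. sin_coeff m * x ^ m) = x" by simp
    moreover have "fact 3 = (6::real)" by (simp add: numeral_3_eq_3)
    ultimately show ?thesis using Maclaurin_sin_bound[of x 3] by simp
  qed
  show ?thesis
  proof (cases "\<theta> \<le> 1")
    case True
    then have "\<theta> * \<theta>^2 \<le> \<theta> * 1" using assms(1) by (intro mult_left_mono power_le_one) auto
    then have "\<theta>^3 \<le> \<theta>" by (simp add: power3_eq_cube power2_eq_square)
    moreover have "\<bar>sin \<theta> - \<theta>\<bar> \<le> \<theta>^3 / 6" using cubic[of \<theta>] assms(1) by simp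
    ultimately show ?thesis by linarith
  next
    case False
    then have "sin 1 \<le> sin \<theta>" using assms by (subst sin_mono_le_eq) auto
    moreover have "\<theta> / 4 < 1 / 2" using assms pi_less_4 by simp
    moreover have "\<bar>sin 1 - 1\<bar> \<le> (1::real) / 6" using cubic[of 1] by simp
    ultimately show ?thesis by linarith
  qed
qed

lemma arccos_le_if_complement_small:
  assumes "0 \<le> c" "0 \<le> s" "c^2 + s^2 = 1" "s \<le> \<theta> / 4" "0 < \<theta>"
  shows "arccos c \<le> \<theta>"
proof -
  have "c^2 \<le> 1" "s^2 \<le> 1" using assms(3) zero_le_power2[of c] zero_le_power2[of s] by linarith+
  then have "c \<le> 1" "s \<le> 1" using power2_le_imp_le[of _ 1] by simp_all
  have "1 - c^2 = s^2" using assms(3) by linarith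
  then have "sqrt (1 - c^2) = s" using assms(2) by simp
  then have "arccos c = arcsin s"
    using assms(1) \<open>c \<le> 1\<close> by (simp add: arccos_arcsin_sqrt_pos)
  show ?thesis
  proof (cases "\<theta> < pi / 2")
    case True
    then have "s \<le> sin \<theta>" using sin_ge_quarter assms(4,5) by fastforce
    then have "arcsin s \<le> \<theta>"
      using arcsin_le_iff[of s \<theta>] True assms(2,5) \<open>s \<le> 1\<close> by simp
    then show ?thesis using \<open>arccos c = arcsin s\<close> by simp
  next
    case False
    then show ?thesis using arccos_le_pi2[OF assms(1) \<open>c \<le> 1\<close>] by linarith
  qed
qed

lemma inner_orthogonal_frame_sq:
  fixes u n v :: "real^2"
  assumes "norm n = 1" "u \<bullet> n = 0"
  shows "(v \<bullet> u)^2 + (norm u * (v \<bullet> n))^2 = (norm v * norm u)^2"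
proof -
  have inner2: "x \<bullet> y = x$1 * y$1 + x$2 * y$2" for x y :: "real^2"
    by (simp add: inner_vec_def sum_2)
  have norm2: "norm x^2 = x$1^2 + x$2^2" for x :: "real^2"
    unfolding power2_norm_eq_inner inner2 by (simp add: power2_eq_square)
  have "n$1^2 + n$2^2 = 1" "u$1 * n$1 + u$2 * n$2 = 0"
    using assms norm2[of n] by (simp_all add: inner2)
  then have "(v$1 * u$1 + v$2 * u$2)^2 + (u$1^2 + u$2^2) * (v$1 * n$1 + v$2 * n$2)^2
      = (v$1^2 + v$2^2) * (u$1^2 + u$2^2)"
    by algebra
  then show ?thesis by (simp add: power_mult_distrib norm2 inner2)
qed

lemma line_angle_le_if_normal_component_le:
  fixes v u n :: "real^2"
  assumes "norm n = 1" "u \<noteq> 0" "u \<bullet> n = 0" "v \<noteq> 0"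
    "4 * \<bar>v \<bullet> n\<bar> \<le> \<theta> * norm v" "0 < \<theta>"
  shows "line_angle v u \<le> \<theta>"
proof -
  define c where "c = \<bar>v \<bullet> u\<bar> / (norm v * norm u)"
  define s where "s = \<bar>v \<bullet> n\<bar> / norm v"
  have "c^2 + s^2 = ((v \<bullet> u)^2 + (norm u * (v \<bullet> n))^2) / (norm v * norm u)^2"
    using assms(2,4) by (simp add: c_def s_def power_divide power_mult_distrib field_simps)
  also have "\<dots> = 1"
    using inner_orthogonal_frame_sq[OF assms(1,3)] assms(2,4) by simp
  finally have "c^2 + s^2 = 1" .
  moreover have "s \<le> \<theta> / 4" using assms(4,5) by (simp add: s_def field_simps)
  ultimately have "arccos c \<le> \<theta>"
    by (intro arccos_le_if_complement_small[of c s] assms(6)) (simp_all add: c_def s_def)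
  then show ?thesis by (simp add: line_angle_def c_def)
qed

lemma center_on_normal_if_disjoint_balls:
  fixes q e z :: "'a::real_inner"
  assumes "norm e = 1" "0 < r" "0 < d" "ball (q - r *\<^sub>R e) r \<inter> ball z d = {}" "dist z q = d"
  shows "z = q + d *\<^sub>R e"
proof -
  define h where "h = z - q"
  have h: "norm h = d" using assms(5) by (simp add: h_def dist_norm)
  have "r + d \<le> norm (h + r *\<^sub>R e)"
    using dist_ge_radii_if_disjoint_balls[OF assms(4,2,3)]
    by (simp add: h_def dist_norm algebra_simps norm_minus_commute)
  then have "(r + d)^2 \<le> norm (h + r *\<^sub>R e)^2"
    using assms(2,3) by (simp add: power_mono)
  then have "d \<le> h \<bullet> e"
    using norm_add_scaleR_unit_sq[OF assms(1), of h r] h assms(2)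
    by (simp add: power2_eq_square algebra_simps)
  then have "norm (h + (- d) *\<^sub>R e)^2 \<le> 0"
    using norm_add_scaleR_unit_sq[OF assms(1), of h "- d"] h assms(3)
    by (simp add: power2_eq_square mult_left_mono)
  then show ?thesis by (simp add: h_def algebra_simps)
qed

lemma rolling_nearest_frontier_point:
  fixes S :: "(real^2) set"
  assumes "rolling S r" "rolling (- S) r" "0 < r" "S \<noteq> {}" "0 < infdist z S"
  obtains q e where "q \<in> frontier S" "rolling_normal S r q e" "z = q + infdist z S *\<^sub>R e"
proof -
  define d where "d = infdist z S"
  have "closure S \<noteq> {}" using assms(4) by simp
  then obtain q where q: "q \<in> closure S" "infdist z (closure S) = dist z q"
    using infdist_attains_inf[of "closure S" z] by blast
  moreover have "infdist z (closure S) = d" by (simp add: d_def infdist_eq_setdist)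
  ultimately have q: "q \<in> closure S" "dist z q = d" by simp_all
  have "y \<notin> ball z d" if "y \<in> S" for y
    using infdist_le[OF that, of z] by (simp add: d_def)
  then have ball: "ball z d \<inter> S = {}" by blast
  then have "closure (ball z d) \<subseteq> closure (- S)" by (intro closure_mono) blast
  then have "cball z d \<subseteq> - interior S" using assms(5) by (simp add: d_def closure_complement)
  then have "q \<in> frontier S" using q by (auto simp: frontier_def)
  moreover obtain e where e: "rolling_normal S r q e"
    using rolling_normal_exists[OF assms(1,2) \<open>q \<in> frontier S\<close> assms(3)] .
  moreover have "z = q + d *\<^sub>R e"
    using e ball q(2) assms(3,5)
    by (intro center_on_normal_if_disjoint_balls[of e r d q]) (auto simp: rolling_normal_def d_def)
  ultimately show ?thesis using that by (simp add: d_def)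
qed

text \<open>\<open>W\<close> and \<open>P\<close> stand for \<open>|x - q|\<^sup>2\<close> and \<open>(x - q)\<cdot>e\<close>: the hypotheses say that \<open>x\<close> lies outside
  \<open>B(q + r e, r)\<close> and on the sphere of radius \<open>\<alpha>\<close> about \<open>q + d e\<close>.\<close>

lemma sphere_outside_ball_bounds:
  fixes W P d r \<alpha> :: real
  assumes "0 \<le> W" "2 * r * P \<le> W" "W - 2 * d * P + d^2 = \<alpha>^2" "\<alpha> / 2 \<le> d" "d < \<alpha>" "\<alpha> < r"
  shows "W \<le> 2 * r * \<alpha> / (r - \<alpha>) * (\<alpha> - d)"
    and "\<bar>P\<bar> \<le> (2 * r * \<alpha> / (r - \<alpha>) + 2 * \<alpha>) / \<alpha> * (\<alpha> - d)"
proof -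
  have d: "0 < d" "d < r" using assms(4-6) by linarith+
  have dP: "2 * d * P = W + d^2 - \<alpha>^2" using assms(3) by linarith
  have "d^2 \<le> \<alpha>^2" using assms(5) d(1) by (simp add: power_mono)
  moreover have "\<alpha>^2 - d^2 = 2 * \<alpha> * (\<alpha> - d) - (\<alpha> - d)^2"
    by (simp add: power2_eq_square algebra_simps)
  ultimately have gap: "0 \<le> \<alpha>^2 - d^2" "\<alpha>^2 - d^2 \<le> 2 * \<alpha> * (\<alpha> - d)"
    using zero_le_power2[of "\<alpha> - d"] by linarith+
  have "r * (2 * d * P) \<le> d * W"
    using mult_left_mono[OF assms(2), of d] d(1) by (simp add: algebra_simps)
  then have "(r - d) * W \<le> r * (\<alpha>^2 - d^2)" unfolding dP by (simp add: algebra_simps)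
  also have "\<dots> \<le> r * (2 * \<alpha> * (\<alpha> - d))" using gap(2) d by simp
  finally have "W \<le> r * (2 * \<alpha> * (\<alpha> - d)) / (r - d)" using d by (simp add: field_simps)
  also have "\<dots> \<le> r * (2 * \<alpha> * (\<alpha> - d)) / (r - \<alpha>)"
    using assms(5,6) d by (intro divide_left_mono) auto
  finally show W: "W \<le> 2 * r * \<alpha> / (r - \<alpha>) * (\<alpha> - d)" by (simp add: field_simps)
  have "\<alpha> * \<bar>P\<bar> \<le> 2 * d * \<bar>P\<bar>" using assms(4) by (simp add: mult_right_mono)
  also have "\<dots> \<le> W + (\<alpha>^2 - d^2)" using dP assms(1) gap(1) d(1) by (simp add: abs_mult abs_le_iff)
  also have "\<dots> \<le> (2 * r * \<alpha> / (r - \<alpha>) + 2 * \<alpha>) * (\<alpha> - d)"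
    using W gap(2) by (simp add: algebra_simps)
  finally show "\<bar>P\<bar> \<le> (2 * r * \<alpha> / (r - \<alpha>) + 2 * \<alpha>) / \<alpha> * (\<alpha> - d)"
    using assms(4,5) by (simp add: field_simps)
qed

lemma rolling_normal_sphere_point_bounds:
  fixes q e x :: "'a::real_inner"
  assumes "rolling_normal S r q e" "x \<in> S" "dist (q + d *\<^sub>R e) x = \<alpha>"
    "\<alpha> / 2 \<le> d" "d < \<alpha>" "\<alpha> < r"
  shows "norm (x - q)^2 \<le> 2 * r * \<alpha> / (r - \<alpha>) * (\<alpha> - d)"
    and "\<bar>(x - q) \<bullet> e\<bar> \<le> (2 * r * \<alpha> / (r - \<alpha>) + 2 * \<alpha>) / \<alpha> * (\<alpha> - d)"
proof -
  have e: "norm e = 1" and outer: "ball (q + r *\<^sub>R e) r \<inter> S = {}"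
    using assms(1) by (simp_all add: rolling_normal_def)
  have "x \<notin> ball (q + r *\<^sub>R e) r" using outer assms(2) by blast
  then have "r \<le> norm ((x - q) + (- r) *\<^sub>R e)"
    by (simp add: dist_norm algebra_simps norm_minus_commute)
  then have "r^2 \<le> norm ((x - q) + (- r) *\<^sub>R e)^2"
    using assms(4-6) by (simp add: power_mono)
  then have outside: "2 * r * ((x - q) \<bullet> e) \<le> norm (x - q)^2"
    using norm_add_scaleR_unit_sq[OF e, of "x - q" "- r"] by simp
  have "norm ((x - q) + (- d) *\<^sub>R e) = \<alpha>"
    using assms(3) by (simp add: dist_norm algebra_simps norm_minus_commute)
  then have "norm (x - q)^2 - 2 * d * ((x - q) \<bullet> e) + d^2 = \<alpha>^2"
    using norm_add_scaleR_unit_sq[OF e, of "x - q" "- d"] by simp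
  from sphere_outside_ball_bounds[OF _ outside this assms(4-6)]
  show "norm (x - q)^2 \<le> 2 * r * \<alpha> / (r - \<alpha>) * (\<alpha> - d)"
    and "\<bar>(x - q) \<bullet> e\<bar> \<le> (2 * r * \<alpha> / (r - \<alpha>) + 2 * \<alpha>) / \<alpha> * (\<alpha> - d)"
    by simp_all
qed

lemma closed_segment_norm_inner_bounds:
  fixes x1 x2 q e :: "'a::real_inner"
  assumes "x \<in> closed_segment x1 x2" "norm (x1 - q) \<le> B" "norm (x2 - q) \<le> B"
    "\<bar>(x1 - q) \<bullet> e\<bar> \<le> Q" "\<bar>(x2 - q) \<bullet> e\<bar> \<le> Q"
  shows "norm (x - q) \<le> B" and "\<bar>(x - q) \<bullet> e\<bar> \<le> Q"
proof -
  obtain u where u: "0 \<le> u" "u \<le> 1" "x = (1 - u) *\<^sub>R x1 + u *\<^sub>R x2"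
    using assms(1) unfolding closed_segment_def by blast
  then have xq: "x - q = (1 - u) *\<^sub>R (x1 - q) + u *\<^sub>R (x2 - q)"
    by (simp add: algebra_simps)
  have "norm (x - q) \<le> (1 - u) * norm (x1 - q) + u * norm (x2 - q)"
    unfolding xq using norm_triangle_ineq[of "(1 - u) *\<^sub>R (x1 - q)" "u *\<^sub>R (x2 - q)"] u by simp
  also have "\<dots> \<le> B" using u assms(2,3) by (intro convex_bound_le) auto
  finally show "norm (x - q) \<le> B" .
  have "\<bar>(x - q) \<bullet> e\<bar> \<le> \<bar>(1 - u) * ((x1 - q) \<bullet> e)\<bar> + \<bar>u * ((x2 - q) \<bullet> e)\<bar>"
    unfolding xq inner_add_left inner_scaleR_left by (rule abs_triangle_ineq)
  also have "\<dots> = (1 - u) * \<bar>(x1 - q) \<bullet> e\<bar> + u * \<bar>(x2 - q) \<bullet> e\<bar>"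
    using u by (simp add: abs_mult)
  also have "\<dots> \<le> Q" using u assms(4,5) by (intro convex_bound_le) auto
  finally show "\<bar>(x - q) \<bullet> e\<bar> \<le> Q" .
qed

lemma infdist_frontier_le_near_ball:
  fixes x c :: "'a::euclidean_space"
  assumes "0 < r" "dist x c \<le> r + \<delta>" "(x \<in> S \<and> ball c r \<inter> S = {}) \<or> (x \<notin> S \<and> ball c r \<subseteq> S)"
  shows "infdist x (frontier S) \<le> \<delta>"
proof -
  have "c \<in> ball c r" "x \<in> closed_segment x c" "c \<in> closed_segment x c"
    using assms(1) by simp_all
  then have "closed_segment x c \<inter> S \<noteq> {}" "closed_segment x c - S \<noteq> {}"
    using assms(3) by blast+
  then have "closed_segment x c \<inter> frontier S \<noteq> {}"
    by (rule connected_Int_frontier[OF connected_segment])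
  then obtain p where p: "p \<in> closed_segment x c" "p \<in> frontier S" by blast
  have "r \<le> dist c p" using assms(3) p(2) dist_ge_radius_if_frontier by blast
  moreover have "dist x c = dist x p + dist p c"
    using p(1) by (simp add: between_mem_segment[symmetric] between)
  ultimately have "dist x p \<le> \<delta>" using assms(2) by (simp add: dist_commute)
  then show ?thesis using infdist_le[OF p(2), of x] by linarith
qed

lemma dist_tangent_center_le:
  fixes q e x :: "'a::real_inner"
  assumes "norm e = 1" "0 < r" "\<bar>a\<bar> = r" "0 \<le> \<delta>"
    "norm (x - q)^2 + 2 * r * \<bar>(x - q) \<bullet> e\<bar> \<le> r * \<delta>"
  shows "dist x (q + a *\<^sub>R e) \<le> r + \<delta>"
proof -
  have "dist x (q + a *\<^sub>R e) = norm ((x - q) + (- a) *\<^sub>R e)"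
    by (simp add: dist_norm algebra_simps)
  moreover have "(- a)^2 = r^2" using assms(3) by (metis power2_abs abs_minus_cancel)
  ultimately have "dist x (q + a *\<^sub>R e)^2 = norm (x - q)^2 + 2 * (- a) * ((x - q) \<bullet> e) + r^2"
    using norm_add_scaleR_unit_sq[OF assms(1), of "x - q" "- a"] by simp
  moreover have "- a * ((x - q) \<bullet> e) \<le> r * \<bar>(x - q) \<bullet> e\<bar>"
    using abs_ge_self[of "- a * ((x - q) \<bullet> e)"] assms(3) by (simp add: abs_mult)
  moreover have "(r + \<delta>)^2 = r^2 + 2 * (r * \<delta>) + \<delta>^2" by (simp add: power2_eq_square algebra_simps)
  moreover have "0 \<le> r * \<delta>" using assms(2,4) by simp
  ultimately have "dist x (q + a *\<^sub>R e)^2 \<le> (r + \<delta>)^2"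
    using assms(5) zero_le_power2[of \<delta>] by linarith
  then show ?thesis
    by (rule power2_le_imp_le) (use assms(2,4) in linarith)
qed

lemma infdist_frontier_le_near_rolling_normal:
  fixes q e x :: "'a::euclidean_space"
  assumes "rolling_normal S r q e" "0 < r" "norm (x - q)^2 \<le> K * \<epsilon>" "\<bar>(x - q) \<bullet> e\<bar> \<le> M * \<epsilon>"
  shows "infdist x (frontier S) \<le> (K + 2 * r * M) / r * \<epsilon>"
proof -
  define \<delta> where "\<delta> = (K + 2 * r * M) / r * \<epsilon>"
  have e: "norm e = 1" and inner: "ball (q - r *\<^sub>R e) r \<subseteq> S" and outer: "ball (q + r *\<^sub>R e) r \<inter> S = {}"
    using assms(1) by (simp_all add: rolling_normal_def)
  have "r * \<delta> = K * \<epsilon> + 2 * r * (M * \<epsilon>)" using assms(2) by (simp add: \<delta>_def field_simps)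
  moreover have "2 * r * \<bar>(x - q) \<bullet> e\<bar> \<le> 2 * r * (M * \<epsilon>)" using assms(2,4) by simp
  ultimately have bound: "norm (x - q)^2 + 2 * r * \<bar>(x - q) \<bullet> e\<bar> \<le> r * \<delta>"
    using assms(3) by linarith
  moreover have "0 \<le> 2 * r * \<bar>(x - q) \<bullet> e\<bar>" using assms(2) by simp
  ultimately have "0 \<le> r * \<delta>" using zero_le_power2[of "norm (x - q)"] by linarith
  then have "0 \<le> \<delta>" using assms(2) by (simp add: zero_le_mult_iff)
  with bound have "dist x (q + r *\<^sub>R e) \<le> r + \<delta>" "dist x (q - r *\<^sub>R e) \<le> r + \<delta>"
    using dist_tangent_center_le[OF e assms(2), of r] dist_tangent_center_le[OF e assms(2), of "- r"]
      assms(2) by simp_all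
  then have "infdist x (frontier S) \<le> \<delta>"
    using infdist_frontier_le_near_ball[OF assms(2), of x "q + r *\<^sub>R e" \<delta> S]
      infdist_frontier_le_near_ball[OF assms(2), of x "q - r *\<^sub>R e" \<delta> S] inner outer
    by (cases "x \<in> S") simp_all
  then show ?thesis by (simp add: \<delta>_def)
qed

lemma closed_segment_near_frontier:
  fixes q e x :: "'a::euclidean_space"
  assumes "rolling_normal S r q e" "\<alpha> / 2 \<le> d" "d < \<alpha>" "\<alpha> < r"
    "x1 \<in> S" "x2 \<in> S" "dist (q + d *\<^sub>R e) x1 = \<alpha>" "dist (q + d *\<^sub>R e) x2 = \<alpha>"
    "x \<in> closed_segment x1 x2"
  defines "K \<equiv> 2 * r * \<alpha> / (r - \<alpha>)"
  shows "norm (x - q) \<le> sqrt (K * (\<alpha> - d))"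
    and "infdist x (frontier S) \<le> (K + 2 * r * ((K + 2 * \<alpha>) / \<alpha>)) / r * (\<alpha> - d)"
proof -
  note ends = rolling_normal_sphere_point_bounds[OF assms(1) _ _ assms(2-4), folded K_def]
  have "norm (x1 - q) \<le> sqrt (K * (\<alpha> - d))" "norm (x2 - q) \<le> sqrt (K * (\<alpha> - d))"
    using ends(1)[OF assms(5,7)] ends(1)[OF assms(6,8)] by (simp_all add: real_le_rsqrt)
  from closed_segment_norm_inner_bounds[OF assms(9) this ends(2)[OF assms(5,7)] ends(2)[OF assms(6,8)]]
  have seg: "norm (x - q) \<le> sqrt (K * (\<alpha> - d))"
    "\<bar>(x - q) \<bullet> e\<bar> \<le> (K + 2 * \<alpha>) / \<alpha> * (\<alpha> - d)" .
  then show "norm (x - q) \<le> sqrt (K * (\<alpha> - d))" by simp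
  have "0 \<le> K" using assms(2-4) by (simp add: K_def)
  then have "0 \<le> K * (\<alpha> - d)" using assms(3) by simp
  then have "norm (x - q)^2 \<le> K * (\<alpha> - d)"
    using power_mono[OF seg(1), of 2] by simp
  from infdist_frontier_le_near_rolling_normal[OF assms(1) _ this seg(2)] assms(2-4)
  show "infdist x (frontier S) \<le> (K + 2 * r * ((K + 2 * \<alpha>) / \<alpha>)) / r * (\<alpha> - d)"
    by simp
qed

lemma chord_inner_normal_le:
  fixes q e x1 x2 :: "'a::real_inner"
  assumes "norm e = 1" "dist (q + d *\<^sub>R e) x1 = dist (q + d *\<^sub>R e) x2"
    "norm (x1 - q) \<le> B" "norm (x2 - q) \<le> B"
  shows "d * \<bar>(x2 - x1) \<bullet> e\<bar> \<le> norm (x2 - x1) * B"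
proof -
  define w1 w2 where "w1 = x1 - q" and "w2 = x2 - q"
  have "norm (w1 + (- d) *\<^sub>R e) = norm (w2 + (- d) *\<^sub>R e)"
    using assms(2) by (simp add: w1_def w2_def dist_norm algebra_simps norm_minus_commute)
  then have "norm w1^2 - 2 * d * (w1 \<bullet> e) = norm w2^2 - 2 * d * (w2 \<bullet> e)"
    using norm_add_scaleR_unit_sq[OF assms(1), of w1 "- d"] norm_add_scaleR_unit_sq[OF assms(1), of w2 "- d"]
    by simp
  moreover have "(w2 - w1) \<bullet> (w1 + w2) = norm w2^2 - norm w1^2"
    by (simp add: power2_norm_eq_inner inner_diff_left inner_add_right inner_commute[of w1 w2])
  ultimately have "2 * d * ((w2 - w1) \<bullet> e) = (w2 - w1) \<bullet> (w1 + w2)"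
    by (simp add: inner_diff_left right_diff_distrib)
  then have "2 * (d * \<bar>(w2 - w1) \<bullet> e\<bar>) \<le> \<bar>(w2 - w1) \<bullet> (w1 + w2)\<bar>"
    by (simp add: abs_mult)
  also have "\<dots> \<le> norm (w2 - w1) * norm (w1 + w2)" by (rule Cauchy_Schwarz_ineq2)
  also have "\<dots> \<le> norm (w2 - w1) * (2 * B)"
    using norm_triangle_ineq[of w1 w2] assms(3,4) by (intro mult_left_mono) (simp_all add: w1_def w2_def)
  finally have "2 * (d * \<bar>(w2 - w1) \<bullet> e\<bar>) \<le> 2 * (norm (w2 - w1) * B)" by simp
  then show ?thesis by (simp add: w1_def w2_def)
qed

lemma chord_tangent_angle_le:
  fixes S :: "(real^2) set"
  assumes "rolling_normal S r q e" "rolling_normal S r p n" "0 < r" "tangent_dir (frontier S) p u"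
    "0 < d" "dist (q + d *\<^sub>R e) x1 = dist (q + d *\<^sub>R e) x2" "x1 \<noteq> x2"
    "norm (x1 - q) \<le> B" "norm (x2 - q) \<le> B"
  shows "line_angle (x2 - x1) u \<le> 4 * (B / d + norm (p - q) / r)"
proof -
  define v where "v = x2 - x1"
  have v: "v \<noteq> 0" using assms(7) by (simp add: v_def)
  have "norm v \<le> norm (x1 - q) + norm (x2 - q)"
    using norm_triangle_ineq4[of "x2 - q" "x1 - q"] by (simp add: v_def add.commute)
  moreover have "0 < norm v" using v by simp
  ultimately have "0 < B" using assms(8,9) by linarith
  have e: "norm e = 1" and n: "norm n = 1" using assms(1,2) by (simp_all add: rolling_normal_def)
  \<comment> \<open>\<open>v\<cdot>n = v\<cdot>e + v\<cdot>(n - e)\<close>: the first term is small since \<open>x1, x2\<close> are equidistant from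
    \<open>q + d e\<close>, the second since normals are Lipschitz along \<open>\<partial>S\<close>.\<close>
  have "d * \<bar>v \<bullet> e\<bar> \<le> norm v * B"
    using chord_inner_normal_le[OF e assms(6,8,9)] by (simp add: v_def)
  then have along: "\<bar>v \<bullet> e\<bar> \<le> norm v * (B / d)" using assms(5) by (simp add: field_simps)
  have "\<bar>v \<bullet> (n - e)\<bar> \<le> norm v * norm (n - e)" by (rule Cauchy_Schwarz_ineq2)
  also have "\<dots> \<le> norm v * (norm (p - q) / r)"
    using rolling_normal_lipschitz[OF assms(2,1,3)] by (rule mult_left_mono) simp
  finally have "\<bar>v \<bullet> n\<bar> \<le> norm v * (B / d) + norm v * (norm (p - q) / r)"
    using along abs_triangle_ineq[of "v \<bullet> e" "v \<bullet> (n - e)"] by (simp add: inner_diff_right)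
  moreover have "norm v * (B / d) + norm v * (norm (p - q) / r) = (B / d + norm (p - q) / r) * norm v"
    by (simp add: algebra_simps)
  ultimately have "4 * \<bar>v \<bullet> n\<bar> \<le> 4 * (B / d + norm (p - q) / r) * norm v"
    by linarith
  moreover have "u \<noteq> 0" using assms(4) by (simp add: tangent_dir_def)
  moreover have "0 < 4 * (B / d + norm (p - q) / r)"
    using \<open>0 < B\<close> assms(3,5) by (simp add: add_pos_nonneg)
  ultimately show ?thesis
    using line_angle_le_if_normal_component_le[OF n _ tangent_dir_orthogonal_normal[OF assms(2,3,4)] v]
    by (simp add: v_def)
qed

text \<open>The conclusion of the theorem is \<open>chord_bounds S x1 x2 t (sqrt t) (sqrt t)\<close>.\<close>

definition chord_bounds :: "(real^2) set \<Rightarrow> real^2 \<Rightarrow> real^2 \<Rightarrow> real \<Rightarrow> real \<Rightarrow> real \<Rightarrow> bool" where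
  "chord_bounds S x1 x2 \<delta> l \<theta> \<longleftrightarrow>
     (\<forall>x \<in> closed_segment x1 x2. infdist x (frontier S) < \<delta>) \<and>
     norm (x1 - x2) \<le> l \<and>
     (x1 \<noteq> x2 \<longrightarrow>
        (\<forall>x \<in> closed_segment x1 x2. \<forall>p u.
           p \<in> frontier S \<and> dist x p = infdist x (frontier S) \<and>
           tangent_dir (frontier S) p u
           \<longrightarrow> line_angle (x2 - x1) u \<le> \<theta>))"

lemma chord_bounds_mono:
  assumes "chord_bounds S x1 x2 \<delta> l \<theta>" "\<delta> \<le> \<delta>'" "l \<le> l'" "\<theta> \<le> \<theta>'"
  shows "chord_bounds S x1 x2 \<delta>' l' \<theta>'"
  using assms unfolding chord_bounds_def by (meson less_le_trans order_trans)

lemma chord_bounds_near_tangency: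
  fixes S :: "(real^2) set"
  assumes "rolling S r" "rolling (- S) r" "rolling_normal S r q e" "\<alpha> / 2 \<le> d" "d < \<alpha>" "\<alpha> < r"
    "x1 \<in> S" "x2 \<in> S" "dist (q + d *\<^sub>R e) x1 = \<alpha>" "dist (q + d *\<^sub>R e) x2 = \<alpha>"
  defines "B \<equiv> sqrt (2 * r * \<alpha> / (r - \<alpha>) * (\<alpha> - d))"
    and "\<delta> \<equiv> (2 * r * \<alpha> / (r - \<alpha>) + 2 * r * ((2 * r * \<alpha> / (r - \<alpha>) + 2 * \<alpha>) / \<alpha>)) / r * (\<alpha> - d)"
  shows "chord_bounds S x1 x2 (\<delta> + (\<alpha> - d)) (2 * B) (4 * (B / d + (B + \<delta>) / r))"
proof -
  have r: "0 < r" using assms(4-6) by linarith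
  note seg = closed_segment_near_frontier[OF assms(3-10), folded B_def \<delta>_def]
  have ends: "norm (x1 - q) \<le> B" "norm (x2 - q) \<le> B" using seg(1) by auto
  have angle: "line_angle (x2 - x1) u \<le> 4 * (B / d + (B + \<delta>) / r)"
    if hyps: "x1 \<noteq> x2" "x \<in> closed_segment x1 x2" "p \<in> frontier S"
      "dist x p = infdist x (frontier S)" "tangent_dir (frontier S) p u" for x p u
  proof -
    obtain n where n: "rolling_normal S r p n" using rolling_normal_exists[OF assms(1,2) hyps(3) r] .
    have "norm (p - q) \<le> norm (x - q) + dist x p"
      using norm_triangle_ineq[of "x - q" "p - x"] by (simp add: dist_norm norm_minus_commute)
    also have "\<dots> \<le> B + \<delta>" using seg[OF hyps(2)] hyps(4) by simp
    finally have "norm (p - q) / r \<le> (B + \<delta>) / r" using r by (simp add: divide_right_mono)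
    moreover have "line_angle (x2 - x1) u \<le> 4 * (B / d + norm (p - q) / r)"
      using assms(4,5,9,10) hyps(1,5) by (intro chord_tangent_angle_le[OF assms(3) n r _ _ _ _ ends]) auto
    ultimately show ?thesis by (smt (verit))
  qed
  have "norm (x1 - x2) \<le> norm (x1 - q) + norm (x2 - q)"
    using norm_triangle_ineq4[of "x1 - q" "x2 - q"] by simp
  \<comment> \<open>the summand \<open>\<alpha> - d > 0\<close> of the distance bound makes it strict\<close>
  then show ?thesis
    unfolding chord_bounds_def using seg(2) ends angle assms(5) by fastforce
qed

lemma chord_angle_bound_le_sqrt:
  fixes K C \<epsilon> \<alpha> d r :: real
  assumes "0 \<le> K" "0 \<le> C" "0 \<le> \<epsilon>" "\<epsilon> \<le> \<alpha>" "\<alpha> / 2 \<le> d" "0 < \<alpha>" "0 < r"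
  shows "4 * (sqrt (K * \<epsilon>) / d + (sqrt (K * \<epsilon>) + C * \<epsilon>) / r)
    \<le> 4 * (2 * sqrt K / \<alpha> + (sqrt K + C * sqrt \<alpha>) / r) * sqrt \<epsilon>"
proof -
  have "sqrt (K * \<epsilon>) / d \<le> 2 * sqrt K / \<alpha> * sqrt \<epsilon>"
    using mult_left_mono[of "1 / d" "2 / \<alpha>" "sqrt (K * \<epsilon>)"] assms
    by (simp add: field_simps real_sqrt_mult)
  moreover have "(sqrt (K * \<epsilon>) + C * \<epsilon>) / r \<le> (sqrt K + C * sqrt \<alpha>) / r * sqrt \<epsilon>"
  proof -
    have "\<epsilon> = sqrt \<epsilon> * sqrt \<epsilon>" using assms(3) by simp
    also have "\<dots> \<le> sqrt \<alpha> * sqrt \<epsilon>" using assms(3,4) by (intro mult_right_mono) auto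
    finally have "sqrt (K * \<epsilon>) + C * \<epsilon> \<le> (sqrt K + C * sqrt \<alpha>) * sqrt \<epsilon>"
      using assms(2) by (simp add: real_sqrt_mult algebra_simps mult_left_mono)
    from divide_right_mono[OF this, of r] assms(7) show ?thesis by simp
  qed
  ultimately have "4 * (sqrt (K * \<epsilon>) / d + (sqrt (K * \<epsilon>) + C * \<epsilon>) / r)
      \<le> 4 * (2 * sqrt K / \<alpha> * sqrt \<epsilon> + (sqrt K + C * sqrt \<alpha>) / r * sqrt \<epsilon>)"
    by (intro mult_left_mono add_mono) simp_all
  then show ?thesis by (simp add: distrib_left distrib_right mult.assoc)
qed

lemma chord_estimates:
  fixes r \<alpha> :: real
  assumes "0 < \<alpha>" "\<alpha> < r"
  obtains C K G :: real where "0 \<le> C" "0 \<le> K" "0 \<le> G"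
    and "\<And>S z x1 x2. rolling S r \<Longrightarrow> rolling (- S) r \<Longrightarrow>
      \<alpha> / 2 \<le> infdist z S \<Longrightarrow> infdist z S < \<alpha> \<Longrightarrow>
      x1 \<in> sphere z \<alpha> \<inter> S \<Longrightarrow> x2 \<in> sphere z \<alpha> \<inter> S \<Longrightarrow>
      chord_bounds S x1 x2 (C * (\<alpha> - infdist z S)) (sqrt (K * (\<alpha> - infdist z S)))
        (G * sqrt (\<alpha> - infdist z S))"
proof -
  define K where "K = 2 * r * \<alpha> / (r - \<alpha>)"
  define C where "C = (K + 2 * r * ((K + 2 * \<alpha>) / \<alpha>)) / r"
  define G where "G = 4 * (2 * sqrt K / \<alpha> + (sqrt K + C * sqrt \<alpha>) / r)"
  have r: "0 < r" and K: "0 \<le> K" using assms by (simp_all add: K_def)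
  then have C: "0 \<le> C" using assms by (simp add: C_def)
  show ?thesis
  proof (rule that[of "C + 1" "4 * K" G])
    show "0 \<le> C + 1" "0 \<le> 4 * K" "0 \<le> G" using C K assms r by (simp_all add: G_def)
    fix S :: "(real^2) set" and z x1 x2
    assume S: "rolling S r" "rolling (- S) r" and d: "\<alpha> / 2 \<le> infdist z S" "infdist z S < \<alpha>"
      and x: "x1 \<in> sphere z \<alpha> \<inter> S" "x2 \<in> sphere z \<alpha> \<inter> S"
    define \<epsilon> where "\<epsilon> = \<alpha> - infdist z S"
    obtain q e where q: "rolling_normal S r q e" "z = q + infdist z S *\<^sub>R e"
    proof (rule rolling_nearest_frontier_point[OF S r])
      show "S \<noteq> {}" "0 < infdist z S" using x d assms(1) by auto
    qed
    have "dist (q + infdist z S *\<^sub>R e) x1 = \<alpha>" "dist (q + infdist z S *\<^sub>R e) x2 = \<alpha>"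
      using x q(2) by simp_all
    from chord_bounds_near_tangency[OF S q(1) d assms(2) _ _ this, folded K_def \<epsilon>_def]
    have bounds: "chord_bounds S x1 x2 (C * \<epsilon> + \<epsilon>) (2 * sqrt (K * \<epsilon>))
        (4 * (sqrt (K * \<epsilon>) / infdist z S + (sqrt (K * \<epsilon>) + C * \<epsilon>) / r))"
      using x by (simp add: C_def)
    have "4 * (sqrt (K * \<epsilon>) / infdist z S + (sqrt (K * \<epsilon>) + C * \<epsilon>) / r) \<le> G * sqrt \<epsilon>"
      unfolding G_def using chord_angle_bound_le_sqrt[OF K C _ _ d(1) assms(1) r] d
      by (simp add: \<epsilon>_def)
    from chord_bounds_mono[OF bounds _ _ this]
    show "chord_bounds S x1 x2 ((C + 1) * \<epsilon>) (sqrt (4 * K * \<epsilon>)) (G * sqrt \<epsilon>)"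
      by (simp add: algebra_simps real_sqrt_mult)
  qed
qed

theorem lemma5:
  fixes r \<alpha> :: real
  assumes "0 < \<alpha>" and "\<alpha> < r"
  shows "\<exists>A>0. \<forall>(S :: (real^2) set) t z x1 x2.
     rolling S r \<and> rolling (- S) r \<and>
     0 < t \<and> t \<le> min \<alpha> (2 * \<alpha>\<^sup>2 / r) \<and>
     z \<notin> S \<and> 0 < \<alpha> - infdist z S \<and> \<alpha> - infdist z S \<le> t / A \<and>
     x1 \<in> sphere z \<alpha> \<inter> S \<and> x2 \<in> sphere z \<alpha> \<inter> S
     \<longrightarrow>
       (\<forall>x \<in> closed_segment x1 x2. infdist x (frontier S) < t) \<and>
       norm (x1 - x2) \<le> sqrt t \<and>
       (x1 \<noteq> x2 \<longrightarrow>
          (\<forall>x \<in> closed_segment x1 x2. \<forall>p u.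
             p \<in> frontier S \<and> dist x p = infdist x (frontier S) \<and>
             tangent_dir (frontier S) p u
             \<longrightarrow> line_angle (x2 - x1) u \<le> sqrt t))"
proof -
  obtain C K G where C: "0 \<le> C" and K: "0 \<le> K" and G: "0 \<le> G"
    and estimates: "\<And>S z x1 x2. rolling S r \<Longrightarrow> rolling (- S) r \<Longrightarrow>
      \<alpha> / 2 \<le> infdist z S \<Longrightarrow> infdist z S < \<alpha> \<Longrightarrow>
      x1 \<in> sphere z \<alpha> \<inter> S \<Longrightarrow> x2 \<in> sphere z \<alpha> \<inter> S \<Longrightarrow>
      chord_bounds S x1 x2 (C * (\<alpha> - infdist z S)) (sqrt (K * (\<alpha> - infdist z S)))
        (G * sqrt (\<alpha> - infdist z S))"
    using chord_estimates[OF assms] by blast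
  define A where "A = 2 + C + K + G^2"
  have A: "0 < A" using C K by (simp add: A_def add_pos_nonneg)
  have "chord_bounds S x1 x2 t (sqrt t) (sqrt t)"
    if H: "rolling S r \<and> rolling (- S) r \<and> 0 < t \<and> t \<le> min \<alpha> (2 * \<alpha>\<^sup>2 / r) \<and>
      z \<notin> S \<and> 0 < \<alpha> - infdist z S \<and> \<alpha> - infdist z S \<le> t / A \<and>
      x1 \<in> sphere z \<alpha> \<inter> S \<and> x2 \<in> sphere z \<alpha> \<inter> S" for S t z x1 x2
  proof -
    define \<epsilon> where "\<epsilon> = \<alpha> - infdist z S"
    have "0 < \<epsilon>" "A * \<epsilon> \<le> t" "t \<le> \<alpha>" using H A by (auto simp: \<epsilon>_def field_simps)
    moreover have "A * \<epsilon> = 2 * \<epsilon> + C * \<epsilon> + K * \<epsilon> + G^2 * \<epsilon>"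
      by (simp add: A_def algebra_simps)
    moreover have "0 \<le> C * \<epsilon>" "0 \<le> K * \<epsilon>" "0 \<le> G^2 * \<epsilon>"
      using C K \<open>0 < \<epsilon>\<close> by simp_all
    ultimately have small: "2 * \<epsilon> \<le> \<alpha>" "C * \<epsilon> \<le> t" "K * \<epsilon> \<le> t" "G^2 * \<epsilon> \<le> t"
      by linarith+
    then have "\<alpha> / 2 \<le> infdist z S" "infdist z S < \<alpha>" using \<open>0 < \<epsilon>\<close> by (auto simp: \<epsilon>_def)
    with H have "chord_bounds S x1 x2 (C * \<epsilon>) (sqrt (K * \<epsilon>)) (sqrt (G^2 * \<epsilon>))"
      using estimates G by (simp add: \<epsilon>_def real_sqrt_mult)
    then show ?thesis using small by (elim chord_bounds_mono) simp_all
  qed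
  then show ?thesis using A unfolding chord_bounds_def by blast
qed

end
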